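(* Let $X,Y$ be finite sets, let $A$ be an arbitrary $|X|\times|Y|$ matrix (possibly with complex entries) with rows indexed by $X$ and columns by $Y$, and let $\mathcal{R}$ be a rectangle partition of $X\times Y$. Then $$\|A\|_2^2\le\sum_{R\in\mathcal{R}}\|A_R\|_2^2.$$
   Context: A rectangle is a subset of $X\times Y$ of the form $X_0\times Y_0$ with $X_0\subseteq X$, $Y_0\subseteq Y$; a rectangle partition is a set of pairwise disjoint rectangles whose union is $X\times Y$. For a rectangle $R=X_0\times Y_0$, $A_R$ is the $|X_0|\times|Y_0|$ submatrix of $A$ with rows in $X_0$ and columns in $Y_0$. $\|\cdot\|_2$ denotes the spectral norm (largest singular value). *)

theory Defs
  imports "HOL-Analysis.Analysis"
begin

text \<open>A matrix with rows indexed by X and columns by Y is a function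
  A :: 'a \<Rightarrow> 'b \<Rightarrow> complex (only values on X \<times> Y matter).\<close>
definition vec_norm2 :: "'b set \<Rightarrow> ('b \<Rightarrow> complex) \<Rightarrow> real" where
  "vec_norm2 Y v = sqrt (\<Sum>y\<in>Y. (cmod (v y))^2)"

definition mat_vec :: "'a set \<Rightarrow> 'b set \<Rightarrow> ('a \<Rightarrow> 'b \<Rightarrow> complex) \<Rightarrow> ('b \<Rightarrow> complex) \<Rightarrow> ('a \<Rightarrow> complex)" where
  "mat_vec X Y A v = (\<lambda>x. \<Sum>y\<in>Y. A x y * v y)"

text \<open>Spectral norm (largest singular value) of the submatrix with rows X and
  columns Y, written as the l2 operator norm.\<close>
definition spec_norm :: "'a set \<Rightarrow> 'b set \<Rightarrow> ('a \<Rightarrow> 'b \<Rightarrow> complex) \<Rightarrow> real" where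
  "spec_norm X Y A = Sup {vec_norm2 X (mat_vec X Y A v) | v. vec_norm2 Y v \<le> 1}"

definition is_rectangle :: "'a set \<Rightarrow> 'b set \<Rightarrow> ('a \<times> 'b) set \<Rightarrow> bool" where
  "is_rectangle X Y R \<longleftrightarrow> (\<exists>X0 Y0. X0 \<subseteq> X \<and> Y0 \<subseteq> Y \<and> R = X0 \<times> Y0)"

definition rectangle_partition :: "'a set \<Rightarrow> 'b set \<Rightarrow> ('a \<times> 'b) set set \<Rightarrow> bool" where
  "rectangle_partition X Y P \<longleftrightarrow>
     (\<forall>R\<in>P. is_rectangle X Y R) \<and>
     (\<forall>R\<in>P. \<forall>S\<in>P. R \<noteq> S \<longrightarrow> R \<inter> S = {}) \<and>
     \<Union>P = X \<times> Y"

definition sub_spec_norm :: "('a \<times> 'b) set \<Rightarrow> ('a \<Rightarrow> 'b \<Rightarrow> complex) \<Rightarrow> real" where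
  "sub_spec_norm R A = spec_norm (fst ` R) (snd ` R) A"

end

theory Submission
  imports Defs
begin

text \<open>Let \<open>v\<close> be a unit vector and \<open>u = A v\<close>. Since the rectangles tile \<open>X \<times> Y\<close>,
  \<open>\<parallel>u\<parallel>\<^sup>2 = \<langle>u, A v\<rangle>\<close> splits as the sum over \<open>R = X\<^sub>R \<times> Y\<^sub>R\<close> of \<open>\<langle>u|\<^bsub>X\<^sub>R\<^esub>, A\<^sub>R v|\<^bsub>Y\<^sub>R\<^esub>\<rangle>\<close>,
  and each term is bounded by \<open>\<parallel>u|\<^bsub>X\<^sub>R\<^esub>\<parallel> \<parallel>A\<^sub>R\<parallel> \<parallel>v|\<^bsub>Y\<^sub>R\<^esub>\<parallel>\<close>. By Cauchy-Schwarz over \<open>R\<close> the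
  sum is at most \<open>(\<Sum>\<^sub>R \<parallel>A\<^sub>R\<parallel>\<^sup>2)\<^sup>1\<^sup>/\<^sup>2\<close> times \<open>(\<Sum>\<^sub>R \<parallel>u|\<^bsub>X\<^sub>R\<^esub>\<parallel>\<^sup>2 \<parallel>v|\<^bsub>Y\<^sub>R\<^esub>\<parallel>\<^sup>2)\<^sup>1\<^sup>/\<^sup>2\<close>, and the
  latter sum is again a sum of \<open>|u\<^sub>x|\<^sup>2 |v\<^sub>y|\<^sup>2\<close> over the tiling, i.e. \<open>\<parallel>u\<parallel>\<^sup>2 \<parallel>v\<parallel>\<^sup>2\<close>.
  Dividing by \<open>\<parallel>u\<parallel>\<close> gives \<open>\<parallel>A v\<parallel> \<le> (\<Sum>\<^sub>R \<parallel>A\<^sub>R\<parallel>\<^sup>2)\<^sup>1\<^sup>/\<^sup>2\<close>.\<close>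

lemma vec_norm2_eq_L2_set: "vec_norm2 X u = L2_set (\<lambda>x. cmod (u x)) X"
  unfolding vec_norm2_def L2_set_def by simp

lemma vec_norm2_nonneg: "0 \<le> vec_norm2 X u"
  by (simp add: vec_norm2_eq_L2_set)

lemma vec_norm2_power2: "(vec_norm2 X u)\<^sup>2 = (\<Sum>x\<in>X. (cmod (u x))\<^sup>2)"
  unfolding vec_norm2_def by (simp add: sum_nonneg)

lemma of_real_vec_norm2_power2: "of_real ((vec_norm2 X u)\<^sup>2) = (\<Sum>x\<in>X. cnj (u x) * u x)"
  by (simp add: vec_norm2_power2 complex_norm_square mult.commute del: of_real_power)

lemma vec_norm2_mult_power2:
  "(vec_norm2 X u * vec_norm2 Y v)\<^sup>2 = (\<Sum>p\<in>X \<times> Y. (cmod (u (fst p)) * cmod (v (snd p)))\<^sup>2)"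
  by (simp add: power_mult_distrib vec_norm2_power2 sum_product sum.cartesian_product case_prod_beta)

lemma vec_norm2_divide:
  "vec_norm2 X (\<lambda>x. u x / of_real c) = vec_norm2 X u / \<bar>c\<bar>"
  unfolding vec_norm2_def
  by (simp add: norm_divide power_divide sum_divide_distrib[symmetric] real_sqrt_divide)

lemma mat_vec_divide:
  "mat_vec X Y A (\<lambda>y. v y / c) = (\<lambda>x. mat_vec X Y A v x / c)"
  unfolding mat_vec_def by (simp add: sum_divide_distrib)

lemma bdd_above_spec_norm_set:
  assumes "finite X" "finite Y"
  shows "bdd_above {vec_norm2 X (mat_vec X Y A v) | v. vec_norm2 Y v \<le> 1}"
proof (rule bdd_aboveI)
  fix r assume "r \<in> {vec_norm2 X (mat_vec X Y A v) | v. vec_norm2 Y v \<le> 1}"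
  then obtain v where r: "r = vec_norm2 X (mat_vec X Y A v)" and v: "vec_norm2 Y v \<le> 1"
    by blast
  have v_le_1: "cmod (v y) \<le> 1" if "y \<in> Y" for y
    using member_le_L2_set[OF assms(2) that, of "\<lambda>y. cmod (v y)"] v
    by (simp add: vec_norm2_eq_L2_set)
  have "r \<le> (\<Sum>x\<in>X. cmod (mat_vec X Y A v x))"
    unfolding r vec_norm2_eq_L2_set by (rule L2_set_le_sum) simp
  also have "\<dots> \<le> (\<Sum>x\<in>X. \<Sum>y\<in>Y. cmod (A x y * v y))"
    unfolding mat_vec_def by (intro sum_mono norm_sum)
  also have "\<dots> \<le> (\<Sum>x\<in>X. \<Sum>y\<in>Y. cmod (A x y))"
    by (intro sum_mono) (simp add: norm_mult mult_left_le v_le_1)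
  finally show "r \<le> (\<Sum>x\<in>X. \<Sum>y\<in>Y. cmod (A x y))" .
qed

lemma vec_norm2_mat_vec_le_spec_norm:
  assumes "finite X" "finite Y" "vec_norm2 Y v \<le> 1"
  shows "vec_norm2 X (mat_vec X Y A v) \<le> spec_norm X Y A"
  unfolding spec_norm_def
  by (rule cSup_upper[OF _ bdd_above_spec_norm_set[OF assms(1,2)]]) (use assms(3) in blast)

lemma spec_norm_nonneg:
  assumes "finite X" "finite Y"
  shows "0 \<le> spec_norm X Y A"
  using vec_norm2_mat_vec_le_spec_norm[OF assms, of "\<lambda>_. 0" A] by (simp add: vec_norm2_def mat_vec_def)

lemma spec_norm_le:
  assumes "\<And>v. vec_norm2 Y v \<le> 1 \<Longrightarrow> vec_norm2 X (mat_vec X Y A v) \<le> c"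
  shows "spec_norm X Y A \<le> c"
  unfolding spec_norm_def
  by (rule cSup_least) (use assms in \<open>auto intro!: exI[of _ "\<lambda>_. 0"] simp: vec_norm2_def\<close>)

lemma vec_norm2_mat_vec_le:
  assumes "finite X" "finite Y"
  shows "vec_norm2 X (mat_vec X Y A v) \<le> spec_norm X Y A * vec_norm2 Y v"
proof (cases "vec_norm2 Y v = 0")
  case True
  then have "\<forall>y\<in>Y. v y = 0"
    using L2_set_eq_0_iff[OF assms(2)] by (simp add: vec_norm2_eq_L2_set)
  then show ?thesis using True by (simp add: vec_norm2_def mat_vec_def)
next
  case False
  define n where "n = vec_norm2 Y v"
  have "n > 0" using False vec_norm2_nonneg[of Y v] by (simp add: n_def)
  have "vec_norm2 Y (\<lambda>y. v y / of_real n) \<le> 1"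
    using \<open>n > 0\<close> by (simp add: vec_norm2_divide n_def)
  from vec_norm2_mat_vec_le_spec_norm[OF assms this, of A]
  have "vec_norm2 X (mat_vec X Y A v) / n \<le> spec_norm X Y A"
    using \<open>n > 0\<close> by (simp add: mat_vec_divide vec_norm2_divide)
  then show ?thesis using \<open>n > 0\<close> by (simp add: n_def divide_le_eq mult.commute)
qed

lemma sum_Times_eq_sum_mat_vec:
  "(\<Sum>p\<in>X \<times> Y. cnj (u (fst p)) * A (fst p) (snd p) * v (snd p))
     = (\<Sum>x\<in>X. cnj (u x) * mat_vec X Y A v x)"
  by (simp add: sum.cartesian_product' mat_vec_def sum_distrib_left mult.assoc)

lemma norm_sum_mat_vec_le:
  assumes "finite X" "finite Y"
  shows "cmod (\<Sum>x\<in>X. cnj (u x) * mat_vec X Y A v x)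
           \<le> vec_norm2 X u * spec_norm X Y A * vec_norm2 Y v"
proof -
  have "cmod (\<Sum>x\<in>X. cnj (u x) * mat_vec X Y A v x)
          \<le> (\<Sum>x\<in>X. \<bar>cmod (u x)\<bar> * \<bar>cmod (mat_vec X Y A v x)\<bar>)"
    by (rule order_trans[OF norm_sum]) (simp add: norm_mult)
  also have "\<dots> \<le> vec_norm2 X u * vec_norm2 X (mat_vec X Y A v)"
    unfolding vec_norm2_eq_L2_set by (rule L2_set_mult_ineq)
  also have "\<dots> \<le> vec_norm2 X u * (spec_norm X Y A * vec_norm2 Y v)"
    by (intro mult_left_mono vec_norm2_mat_vec_le assms vec_norm2_nonneg)
  finally show ?thesis by (simp add: mult.assoc)
qed

lemma rectangle_partition_finite_member:
  assumes "rectangle_partition X Y P" "finite X" "finite Y" "R \<in> P"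
  shows "finite R"
proof -
  have "R \<subseteq> X \<times> Y" using assms(1,4) by (auto simp: rectangle_partition_def)
  with assms(2,3) show ?thesis by (simp add: finite_subset)
qed

lemma rectangle_partition_memberD:
  assumes "rectangle_partition X Y P" "R \<in> P"
  shows "R = fst ` R \<times> snd ` R" "fst ` R \<subseteq> X" "snd ` R \<subseteq> Y"
proof -
  have "is_rectangle X Y R"
    using assms by (simp add: rectangle_partition_def)
  then obtain X0 Y0 where "X0 \<subseteq> X" "Y0 \<subseteq> Y" "R = X0 \<times> Y0"
    unfolding is_rectangle_def by blast
  then show "R = fst ` R \<times> snd ` R" "fst ` R \<subseteq> X" "snd ` R \<subseteq> Y"
    by auto
qed

lemma sum_rectangle_partition:
  assumes "rectangle_partition X Y P" "finite X" "finite Y"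
  shows "(\<Sum>p\<in>X \<times> Y. f p) = (\<Sum>R\<in>P. \<Sum>p\<in>fst ` R \<times> snd ` R. f p)"
proof -
  have "\<Union>P = X \<times> Y" and "\<forall>R\<in>P. \<forall>S\<in>P. R \<noteq> S \<longrightarrow> R \<inter> S = {}"
    using assms(1) by (simp_all add: rectangle_partition_def)
  with rectangle_partition_finite_member[OF assms]
  have "(\<Sum>p\<in>X \<times> Y. f p) = (\<Sum>R\<in>P. \<Sum>p\<in>R. f p)"
    using sum.Union_disjoint[of P f] by auto
  also have "\<dots> = (\<Sum>R\<in>P. \<Sum>p\<in>fst ` R \<times> snd ` R. f p)"
    using rectangle_partition_memberD(1)[OF assms(1)] by (intro sum.cong) auto
  finally show ?thesis .
qed

lemma norm_sum_mat_vec_le_rectangle_partition: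
  assumes "rectangle_partition X Y P" "finite X" "finite Y"
  shows "cmod (\<Sum>x\<in>X. cnj (u x) * mat_vec X Y A v x)
           \<le> (\<Sum>R\<in>P. vec_norm2 (fst ` R) u * sub_spec_norm R A * vec_norm2 (snd ` R) v)"
proof -
  have "(\<Sum>x\<in>X. cnj (u x) * mat_vec X Y A v x)
          = (\<Sum>R\<in>P. \<Sum>x\<in>fst ` R. cnj (u x) * mat_vec (fst ` R) (snd ` R) A v x)"
    by (simp add: sum_Times_eq_sum_mat_vec[symmetric] sum_rectangle_partition[OF assms])
  also have "cmod \<dots> \<le> (\<Sum>R\<in>P. cmod (\<Sum>x\<in>fst ` R. cnj (u x) * mat_vec (fst ` R) (snd ` R) A v x))"
    by (rule norm_sum)
  also have "\<dots> \<le> (\<Sum>R\<in>P. vec_norm2 (fst ` R) u * sub_spec_norm R A * vec_norm2 (snd ` R) v)"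
    unfolding sub_spec_norm_def
    using rectangle_partition_finite_member[OF assms]
    by (intro sum_mono norm_sum_mat_vec_le finite_imageI)
  finally show ?thesis .
qed

lemma sum_rectangle_partition_norm_products_le:
  assumes "rectangle_partition X Y P" "finite X" "finite Y" "\<And>R. R \<in> P \<Longrightarrow> 0 \<le> N R"
  shows "(\<Sum>R\<in>P. vec_norm2 (fst ` R) u * N R * vec_norm2 (snd ` R) v)
           \<le> sqrt (\<Sum>R\<in>P. (N R)\<^sup>2) * (vec_norm2 X u * vec_norm2 Y v)"
proof -
  define a where "a R = vec_norm2 (fst ` R) u * vec_norm2 (snd ` R) v" for R
  have "(\<Sum>R\<in>P. vec_norm2 (fst ` R) u * N R * vec_norm2 (snd ` R) v) = (\<Sum>R\<in>P. \<bar>N R\<bar> * \<bar>a R\<bar>)"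
    using assms(4) by (intro sum.cong) (simp_all add: a_def abs_mult vec_norm2_nonneg)
  also have "\<dots> \<le> L2_set N P * L2_set a P"
    by (rule L2_set_mult_ineq)
  also have "L2_set a P = sqrt ((vec_norm2 X u * vec_norm2 Y v)\<^sup>2)"
    unfolding L2_set_def a_def vec_norm2_mult_power2 sum_rectangle_partition[OF assms(1-3)] ..
  finally show ?thesis
    by (simp add: L2_set_def vec_norm2_nonneg)
qed

lemma vec_norm2_mat_vec_le_rectangle_partition:
  assumes "rectangle_partition X Y P" "finite X" "finite Y"
  shows "vec_norm2 X (mat_vec X Y A v) \<le> sqrt (\<Sum>R\<in>P. (sub_spec_norm R A)\<^sup>2) * vec_norm2 Y v"
proof -
  define u where "u = mat_vec X Y A v"
  define s where "s = sqrt (\<Sum>R\<in>P. (sub_spec_norm R A)\<^sup>2)"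
  have "(vec_norm2 X u)\<^sup>2 = cmod (\<Sum>x\<in>X. cnj (u x) * mat_vec X Y A v x)"
    by (simp add: of_real_vec_norm2_power2[symmetric] u_def del: of_real_power)
  also have "\<dots> \<le> (\<Sum>R\<in>P. vec_norm2 (fst ` R) u * sub_spec_norm R A * vec_norm2 (snd ` R) v)"
    by (rule norm_sum_mat_vec_le_rectangle_partition[OF assms])
  also have "\<dots> \<le> s * (vec_norm2 X u * vec_norm2 Y v)"
    unfolding s_def using rectangle_partition_finite_member[OF assms]
    by (intro sum_rectangle_partition_norm_products_le[OF assms]) (simp add: sub_spec_norm_def spec_norm_nonneg)
  finally have square_le: "vec_norm2 X u * vec_norm2 X u \<le> vec_norm2 X u * (s * vec_norm2 Y v)"
    by (simp add: power2_eq_square mult_ac)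
  have "vec_norm2 X u \<le> s * vec_norm2 Y v"
  proof (cases "vec_norm2 X u = 0")
    case True
    then show ?thesis by (simp add: s_def sum_nonneg vec_norm2_nonneg)
  next
    case False
    then have "0 < vec_norm2 X u" using vec_norm2_nonneg[of X u] by simp
    with square_le show ?thesis by (rule mult_left_le_imp_le)
  qed
  then show ?thesis by (simp add: u_def s_def)
qed

theorem mainTheorem3:
  fixes X :: "'a set" and Y :: "'b set" and A :: "'a \<Rightarrow> 'b \<Rightarrow> complex"
    and P :: "('a \<times> 'b) set set"
  assumes "finite X" and "finite Y" and "rectangle_partition X Y P"
  shows "(spec_norm X Y A)^2 \<le> (\<Sum>R\<in>P. (sub_spec_norm R A)^2)"
proof -
  define S where "S = (\<Sum>R\<in>P. (sub_spec_norm R A)\<^sup>2)"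
  have "spec_norm X Y A \<le> sqrt S"
  proof (rule spec_norm_le)
    fix v assume "vec_norm2 Y v \<le> 1"
    then have "sqrt S * vec_norm2 Y v \<le> sqrt S"
      by (simp add: mult_left_le S_def sum_nonneg)
    with vec_norm2_mat_vec_le_rectangle_partition[OF assms(3,1,2)]
    show "vec_norm2 X (mat_vec X Y A v) \<le> sqrt S"
      unfolding S_def by (rule order_trans)
  qed
  then have "(spec_norm X Y A)\<^sup>2 \<le> (sqrt S)\<^sup>2"
    by (rule power_mono) (rule spec_norm_nonneg[OF assms(1,2)])
  then show ?thesis
    by (simp add: S_def sum_nonneg)
qed

end
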